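(* For integers $n\ge 0$ and $p$ with $p\le n+1$, $$\sum_{j,k}\genfrac{[}{]}{0pt}{}{n}{k}\binom{k}{j}\genfrac{\{}{\}}{0pt}{}{j+1}{p}(-1)^j=\begin{cases}0,&(n+1>p)\\(-1)^n,&(n+1=p).\end{cases}$$
   Context: Here $\genfrac{[}{]}{0pt}{}{n}{k}$ denotes the unsigned (absolute) Stirling number of the first kind and $\genfrac{\{}{\}}{0pt}{}{n}{k}$ the ordinary Stirling number of the second kind (Knuth's notation), with $\genfrac{[}{]}{0pt}{}{0}{0}=\genfrac{\{}{\}}{0pt}{}{0}{0}=1$, $\genfrac{[}{]}{0pt}{}{n}{0}=\genfrac{\{}{\}}{0pt}{}{n}{0}=0$ for $n>0$, and $\genfrac{[}{]}{0pt}{}{n}{k}=\genfrac{\{}{\}}{0pt}{}{n}{k}=0$ for $0\le n<k$. The double sum is over all integers $j,k$ with $0\le j\le k\le n$. *)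

theory Defs
  imports "HOL-Combinatorics.Stirling"
begin

text \<open>Stirling numbers of the second kind with an integer lower index:
  zero for negative lower index (the natural convention; the paper allows any integer p).\<close>
definition Stirling_int :: "nat \<Rightarrow> int \<Rightarrow> int" where
  "Stirling_int m p = (if p < 0 then 0 else int (Stirling m (nat p)))"

end

theory Submission
  imports Defs "HOL-Computational_Algebra.Polynomial"
begin

text \<open>Since \<open>x (x + 1) \<cdots> (x + n) = x \<cdot> \<Sum>\<^sub>k [n,k] (x + 1)\<^sup>k\<close>, comparing
  coefficients gives \<open>\<Sum>\<^sub>k [n,k] (k choose j) = [n+1,j+1]\<close>. The double sum therefore
  collapses to \<open>-\<Sum>\<^sub>m (-1)\<^sup>m [n+1,m] {m,p}\<close>, which the orthogonality of the two kinds
  of Stirling numbers, \<open>\<Sum>\<^sub>m (-1)\<^sup>m [N,m] {m,p} = (-1)\<^sup>N \<delta>\<^sub>N\<^sub>p\<close>, evaluates;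
  orthogonality itself follows by induction on \<open>N\<close> from the two triangular recurrences.\<close>

lemma coeff_pochhammer_X:
  "coeff (pochhammer [:0, 1:] n) k = (of_nat (stirling n k) :: 'a :: comm_semiring_1)"
proof -
  have "pochhammer [:0, 1:] n = (\<Sum>i\<le>n. smult (of_nat (stirling n i) :: 'a) (monom 1 i))"
    by (simp flip: stirling_pochhammer add: monom_altdef of_nat_poly)
  then show ?thesis
    by (cases "k \<le> n")
      (simp_all add: coeff_sum coeff_monom if_distrib[of "times _"] cong: if_cong)
qed

lemma coeff_X_plus_1_power:
  "coeff ([:1, 1:] ^ k) j = (of_nat (k choose j) :: 'a :: comm_semiring_1)"
proof (cases "j \<le> k")
  case True
  then show ?thesis by (simp add: coeff_linear_poly_power)
next
  case False
  then have "degree ([:1, 1 :: 'a:] ^ k) < j"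
    using degree_power_le[of "[:1, 1 :: 'a:]" k] by simp
  with False show ?thesis by (simp add: coeff_eq_0 binomial_eq_0)
qed

lemma coeff_pochhammer_X_plus_1:
  "coeff (pochhammer [:1, 1:] n) j
     = (\<Sum>k\<le>n. of_nat (stirling n k * (k choose j)) :: 'a :: comm_semiring_1)"
proof -
  have "pochhammer [:1, 1:] n = (\<Sum>k\<le>n. smult (of_nat (stirling n k) :: 'a) ([:1, 1:] ^ k))"
    by (simp flip: stirling_pochhammer add: of_nat_poly)
  then show ?thesis
    by (simp add: coeff_sum coeff_X_plus_1_power)
qed

lemma stirling_Suc_Suc_eq_sum_binomial:
  "stirling (Suc n) (Suc j) = (\<Sum>k\<le>n. stirling n k * (k choose j))"
proof -
  have "pochhammer [:0, 1 :: nat:] (Suc n) = pCons 0 (pochhammer [:1, 1:] n)"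
    by (simp add: pochhammer_rec one_pCons del: One_nat_def)
  then have "coeff (pochhammer [:0, 1 :: nat:] (Suc n)) (Suc j) = coeff (pochhammer [:1, 1:] n) j"
    by simp
  then show ?thesis
    by (simp only: coeff_pochhammer_X coeff_pochhammer_X_plus_1 of_nat_id)
qed

lemma alternating_sum_stirling_Stirling:
  "(\<Sum>m\<le>N. (-1) ^ m * of_nat (stirling N m * Stirling m p))
     = (if p = N then (-1) ^ N else (0 :: 'a :: comm_ring_1))"
proof (induction N arbitrary: p)
  case 0
  show ?case by (cases p) simp_all
next
  case (Suc N)
  let ?T = "\<lambda>N p. \<Sum>m\<le>N. (-1) ^ m * (of_nat (stirling N m * Stirling m p) :: 'a)"
  let ?S = "\<lambda>p. \<Sum>m\<le>N. (-1) ^ m * (of_nat (stirling N m * Stirling (Suc m) p) :: 'a)"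
  have "?T (Suc N) p
      = (\<Sum>m\<le>N. (-1) ^ Suc m * of_nat (stirling (Suc N) (Suc m) * Stirling (Suc m) p))"
    by (subst sum.atMost_Suc_shift) simp
  also have "\<dots>
      = of_nat N * (\<Sum>m\<le>N. (-1) ^ Suc m * of_nat (stirling N (Suc m) * Stirling (Suc m) p))
        - ?S p"
    by (simp add: sum.distrib sum_subtractf sum_distrib_left sum_negf algebra_simps)
  also have "(\<Sum>m\<le>N. (-1) ^ Suc m * of_nat (stirling N (Suc m) * Stirling (Suc m) p))
      = ?T N p - of_nat (stirling N 0 * Stirling 0 p)"
  proof -
    have "?T N p = (\<Sum>m\<le>Suc N. (-1) ^ m * of_nat (stirling N m * Stirling m p))"
      by simp
    also have "\<dots> = of_nat (stirling N 0 * Stirling 0 p)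
        + (\<Sum>m\<le>N. (-1) ^ Suc m * of_nat (stirling N (Suc m) * Stirling (Suc m) p))"
      unfolding sum.atMost_Suc_shift by simp
    finally show ?thesis by simp
  qed
  finally have "?T (Suc N) p = of_nat N * ?T N p - ?S p"
    by (cases N) (simp_all add: algebra_simps)
  moreover have "?S p = (case p of 0 \<Rightarrow> 0 | Suc q \<Rightarrow> of_nat (Suc q) * ?T N (Suc q) + ?T N q)"
    by (cases p) (simp_all add: sum.distrib sum_distrib_left algebra_simps)
  ultimately show ?case
    using Suc.IH by (cases p) auto
qed

lemma alternating_sum_stirling_Suc_Stirling_Suc:
  "(\<Sum>j\<le>n. (-1) ^ j * of_nat (stirling (Suc n) (Suc j) * Stirling (Suc j) p))
     = (if p = Suc n then (-1) ^ n else (0 :: 'a :: comm_ring_1))"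
proof -
  have "(\<Sum>m\<le>Suc n. (-1) ^ m * (of_nat (stirling (Suc n) m * Stirling m p) :: 'a))
      = - (\<Sum>j\<le>n. (-1) ^ j * of_nat (stirling (Suc n) (Suc j) * Stirling (Suc j) p))"
    by (simp only: sum.atMost_Suc_shift) (simp add: sum_negf del: stirling.simps)
  moreover have "(\<Sum>m\<le>Suc n. (-1) ^ m * (of_nat (stirling (Suc n) m * Stirling m p) :: 'a))
      = (if p = Suc n then (-1) ^ Suc n else 0)"
    by (rule alternating_sum_stirling_Stirling)
  ultimately show ?thesis
    by (cases "p = Suc n") (simp_all del: stirling.simps Stirling.simps)
qed

lemma double_sum_stirling_binomial:
  "(\<Sum>k\<le>n. \<Sum>j\<le>k. of_nat (stirling n k * (k choose j)) * f j)
     = (\<Sum>j\<le>n. of_nat (stirling (Suc n) (Suc j)) * (f j :: 'a :: comm_semiring_1))"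
proof -
  have "(\<Sum>k\<le>n. \<Sum>j\<le>k. of_nat (stirling n k * (k choose j)) * f j)
      = (\<Sum>k\<le>n. \<Sum>j\<le>n. of_nat (stirling n k * (k choose j)) * f j)"
    by (rule sum.cong[OF refl], rule sum.mono_neutral_left) (simp_all add: binomial_eq_0)
  also have "\<dots> = (\<Sum>j\<le>n. of_nat (\<Sum>k\<le>n. stirling n k * (k choose j)) * f j)"
    by (subst sum.swap) (simp add: sum_distrib_right)
  finally show ?thesis
    by (simp only: stirling_Suc_Suc_eq_sum_binomial)
qed

theorem mainTheorem5:
  fixes n :: nat and p :: int
  assumes "p \<le> int n + 1"
  shows "(\<Sum>k\<le>n. \<Sum>j\<le>k. int (stirling n k) * int (k choose j)
            * Stirling_int (j + 1) p * (-1) ^ j)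
         = (if int n + 1 > p then 0 else (-1) ^ n)"
proof -
  have "(\<Sum>k\<le>n. \<Sum>j\<le>k. int (stirling n k) * int (k choose j)
            * Stirling_int (j + 1) p * (-1) ^ j)
      = (\<Sum>j\<le>n. of_nat (stirling (Suc n) (Suc j)) * (Stirling_int (Suc j) p * (-1) ^ j))"
    using double_sum_stirling_binomial[of n "\<lambda>j. Stirling_int (Suc j) p * (-1) ^ j"]
    by (simp add: mult_ac del: stirling.simps)
  also have "\<dots> = (if int n + 1 > p then 0 else (-1) ^ n)"
  proof (cases "p < 0")
    case True
    then show ?thesis by (simp add: Stirling_int_def)
  next
    case False
    then obtain q where "p = int q"
      by (metis nonneg_int_cases not_less)
    then show ?thesis
      using alternating_sum_stirling_Suc_Stirling_Suc[of n q, where 'a = int] assms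
      by (simp add: Stirling_int_def mult_ac)
  qed
  finally show ?thesis .
qed

end
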